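(* Let $(\bar x,\bar y)$ be a local minimax point of $\min_{x\in X}\max_{y\in Y}f(x,y)$ and suppose $f$ is twice semidifferentiable at $(\bar x,\bar y)$. If for every $h\in T_Y(\bar y)\setminus\{0\}$, $$\mathrm{d}^2_{yy}f(\bar x,\bar y)(h)-\mathrm{d}^2\delta_{X\times Y}\big((\bar x,\bar y);\mathrm{d}f(\bar x,\bar y)\big)(0,h)<0,$$ then $(\bar x,\bar y)$ is a calm local minimax point.
   Context: $X\subseteq\mathbb{R}^n$, $Y\subseteq\mathbb{R}^m$ nonempty closed, $f:\mathbb{R}^n\times\mathbb{R}^m\to\mathbb{R}$; $\mathbb{B}_\epsilon(z)$ closed Euclidean ball. Standing assumption: for every $x\in X$, $\bar y\in Y$, $\epsilon\ge0$ the maximum of $f(x,\cdot)$ over $Y\cap\mathbb{B}_\epsilon(\bar y)$ is attained. A radius function is $\tau:[0,\infty)\to[0,\infty)$ with $\tau(0)=0$, $\tau(\delta)\to0$ as $\delta\downarrow0$; calm at $0$ if $\tau(\delta)\le\kappa\delta$ for all $\delta\in[0,\delta_1]$ for some $\kappa,\delta_1>0$. $(\bar x,\bar y)\in X\times Y$ is a local minimax point if there exist $\delta_0>0$ and a radius function $\tau$ with $f(\bar x,y)\le f(\bar x,\bar y)\le\max_{y'\in Y\cap\mathbb{B}_{\tau(\delta)}(\bar y)}f(x,y')$ for all $\delta\in(0,\delta_0]$, $x\in X\cap\mathbb{B}_\delta(\bar x)$, $y\in Y\cap\mathbb{B}_\delta(\bar y)$; calm local minimax if moreover $\tau$ can be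 taken calm at $0$. Variational notation: for $\psi:\mathbb{R}^r\to\mathbb{R}$, $\mathrm{d}\psi(\bar z)(w):=\liminf_{t\downarrow0,w'\to w}\frac{\psi(\bar z+tw')-\psi(\bar z)}{t}$; $\psi$ is semidifferentiable at $\bar z$ if for each $w$ this is a limit (real-valued); $\mathrm{d}^2\psi(\bar z)(w):=\liminf_{t\downarrow0,w'\to w}\frac{\psi(\bar z+tw')-\psi(\bar z)-t\,\mathrm{d}\psi(\bar z)(w')}{\frac12t^2}$; $\psi$ is twice semidifferentiable at $\bar z$ if it is semidifferentiable there and for each $w$ this liminf is a limit (real-valued). $\mathrm{d}f(\bar x,\bar y)(u,h)$ is the subderivative of $f$ at $(\bar x,\bar y)$ in direction $(u,h)$, and $\mathrm{d}^2_{yy}f(\bar x,\bar y)(h)$ is the second subderivative of $f(\bar x,\cdot)$ at $\bar y$. $T_S(\bar z)$ is the tangent cone ($w\in T_S(\bar z)$ iff $\exists t_k\downarrow0$, $w_k\to w$ with $\bar z+t_kw_k\in S$). For closed $S$, $\bar z\in S$, $\varphi:\mathbb{R}^r\to\mathbb{R}$: $\mathrm{d}^2\delta_S(\bar z;\varphi)(w):=\liminf_{t\downarrow0,\,w'\to w,\ \bar z+tw'\in S}\frac{-2\varphi(w')}{t}$ ($+\infty$ if no such $t,w'$). Thus $\mathrm{d}^2\delta_{X\times Y}((\bar x,\bar y);\mathrm{d}f(\bar x,\bar y))(0,h)=\liminf_{t\downarrow0,\,(u',h')\to(0,h),\ \bar x+tu'\in X,\ \bar y+th'\in Y}\frac{-2\,\mathrm{d}f(\bar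 x,\bar y)(u',h')}{t}$. *)

theory Defs
  imports "HOL-Analysis.Analysis"
begin

definition radius_function :: "(real \<Rightarrow> real) \<Rightarrow> bool" where
  "radius_function \<tau> \<longleftrightarrow>
     (\<forall>\<delta>\<ge>0. \<tau> \<delta> \<ge> 0) \<and> \<tau> 0 = 0 \<and> (\<tau> \<longlongrightarrow> 0) (at_right 0)"

definition calm_at_0 :: "(real \<Rightarrow> real) \<Rightarrow> bool" where
  "calm_at_0 \<tau> \<longleftrightarrow> (\<exists>\<kappa>>0. \<exists>\<delta>1>0. \<forall>\<delta>\<in>{0..\<delta>1}. \<tau> \<delta> \<le> \<kappa> * \<delta>)"

text \<open>The inequality  f(xb,yb) \<le> max over Y \<inter> B_r(yb) of f(x,.)  is written as the existence
  of a point y' of that set with  f(xb,yb) \<le> f(x,y');  under the standing attainment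
  assumption this is the same as comparing with the attained maximum.\<close>

definition minimax_with_radius ::
  "'a::euclidean_space set \<Rightarrow> 'b::euclidean_space set \<Rightarrow> ('a \<Rightarrow> 'b \<Rightarrow> real) \<Rightarrow> 'a \<Rightarrow> 'b
   \<Rightarrow> (real \<Rightarrow> real) \<Rightarrow> bool" where
  "minimax_with_radius X Y f xb yb \<tau> \<longleftrightarrow>
     (\<exists>\<delta>0>0. \<forall>\<delta>\<in>{0<..\<delta>0}. \<forall>x\<in>X \<inter> cball xb \<delta>. \<forall>y\<in>Y \<inter> cball yb \<delta>.
        f xb y \<le> f xb yb \<and> (\<exists>y'\<in>Y \<inter> cball yb (\<tau> \<delta>). f xb yb \<le> f x y'))"

definition local_minimax ::
  "'a::euclidean_space set \<Rightarrow> 'b::euclidean_space set \<Rightarrow> ('a \<Rightarrow> 'b \<Rightarrow> real) \<Rightarrow> 'a \<Rightarrow> 'b \<Rightarrow> bool" where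
  "local_minimax X Y f xb yb \<longleftrightarrow> xb \<in> X \<and> yb \<in> Y \<and>
     (\<exists>\<tau>. radius_function \<tau> \<and> minimax_with_radius X Y f xb yb \<tau>)"

definition calm_local_minimax ::
  "'a::euclidean_space set \<Rightarrow> 'b::euclidean_space set \<Rightarrow> ('a \<Rightarrow> 'b \<Rightarrow> real) \<Rightarrow> 'a \<Rightarrow> 'b \<Rightarrow> bool" where
  "calm_local_minimax X Y f xb yb \<longleftrightarrow> xb \<in> X \<and> yb \<in> Y \<and>
     (\<exists>\<tau>. radius_function \<tau> \<and> calm_at_0 \<tau> \<and> minimax_with_radius X Y f xb yb \<tau>)"

abbreviation dir_filter :: "'z::real_normed_vector \<Rightarrow> (real \<times> 'z) filter" where
  "dir_filter w \<equiv> at_right 0 \<times>\<^sub>F nhds w"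

definition subderiv :: "('z::real_normed_vector \<Rightarrow> real) \<Rightarrow> 'z \<Rightarrow> 'z \<Rightarrow> ereal" where
  "subderiv \<psi> z w =
     Liminf (dir_filter w) (\<lambda>(t, w'). ereal ((\<psi> (z + t *\<^sub>R w') - \<psi> z) / t))"

definition semidifferentiable_at :: "('z::real_normed_vector \<Rightarrow> real) \<Rightarrow> 'z \<Rightarrow> bool" where
  "semidifferentiable_at \<psi> z \<longleftrightarrow>
     (\<forall>w. \<exists>L::real. ((\<lambda>(t, w'). (\<psi> (z + t *\<^sub>R w') - \<psi> z) / t) \<longlongrightarrow> L) (dir_filter w))"

text \<open>Second-order difference quotient; the first-order term d\<psi>(z)(w') is real-valued whenever
  \<psi> is semidifferentiable at z (the only situation in which it is used).\<close>
definition second_quot :: "('z::real_normed_vector \<Rightarrow> real) \<Rightarrow> 'z \<Rightarrow> real \<times> 'z \<Rightarrow> real" where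
  "second_quot \<psi> z = (\<lambda>(t, w').
     (\<psi> (z + t *\<^sub>R w') - \<psi> z - t * real_of_ereal (subderiv \<psi> z w')) / (t\<^sup>2 / 2))"

definition second_subderiv :: "('z::real_normed_vector \<Rightarrow> real) \<Rightarrow> 'z \<Rightarrow> 'z \<Rightarrow> ereal" where
  "second_subderiv \<psi> z w = Liminf (dir_filter w) (\<lambda>p. ereal (second_quot \<psi> z p))"

definition twice_semidifferentiable_at :: "('z::real_normed_vector \<Rightarrow> real) \<Rightarrow> 'z \<Rightarrow> bool" where
  "twice_semidifferentiable_at \<psi> z \<longleftrightarrow> semidifferentiable_at \<psi> z \<and>
     (\<forall>w. \<exists>L::real. (second_quot \<psi> z \<longlongrightarrow> L) (dir_filter w))"

definition tangent_cone :: "'z::real_normed_vector set \<Rightarrow> 'z \<Rightarrow> 'z set" where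
  "tangent_cone S z = {w. \<exists>t w'. (\<forall>k. t k > 0) \<and> t \<longlonglongrightarrow> 0 \<and> w' \<longlonglongrightarrow> w \<and>
                               (\<forall>k. z + t k *\<^sub>R w' k \<in> S)}"

text \<open>Second subderivative of the indicator of S at z relative to phi, in direction w; the Liminf over the empty (bottom) filter is +\<infinity>, as required.\<close>
definition second_subderiv_indicator ::
  "'z::real_normed_vector set \<Rightarrow> 'z \<Rightarrow> ('z \<Rightarrow> real) \<Rightarrow> 'z \<Rightarrow> ereal" where
  "second_subderiv_indicator S z \<phi> w =
     Liminf (inf (dir_filter w) (principal {(t, w'). z + t *\<^sub>R w' \<in> S}))
            (\<lambda>(t, w'). ereal (- 2 * \<phi> w' / t))"

end

theory Submission imports Defs begin

text \<open>If no radius of the form \<kappa>\<delta> worked, there would be x_n \<rightarrow> xb in X whose maximising responses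
  y_n \<rightarrow> yb move superlinearly in |x_n - xb|. Rescaled by s_n = |y_n - yb|, this gives a path
  xb + s_n u_n, yb + s_n v_n with u_n \<rightarrow> 0 and v_n \<rightarrow> h \<noteq> 0 along which f does not drop below
  f(xb, yb). Along such a path the second-order difference quotient of f dominates the quotient
  defining the second subderivative of the indicator of X \<times> Y, while twice semidifferentiability
  makes it converge to the second subderivative of f(xb, .) at yb in direction h; this
  contradicts the strict second-order condition.\<close>

lemma Liminf_filter_antimono:
  fixes g :: "_ \<Rightarrow> 'b::complete_lattice"
  assumes "G \<le> F"
  shows "Liminf F g \<le> Liminf G g"
  unfolding Liminf_def
  by (rule SUP_subset_mono) (use assms in \<open>auto simp: le_filter_def\<close>)

lemma dir_filter_neq_bot: "dir_filter (w::'z::real_normed_vector) \<noteq> bot"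
  by (simp add: prod_filter_eq_bot)

lemma filterlim_dir_filter_Pair_zero:
  "filterlim (\<lambda>(t::real, w::'b::real_normed_vector). (t, ((0::'a::real_normed_vector), w)))
     (dir_filter (0, h)) (dir_filter h)"
proof -
  have "filterlim fst (at_right (0::real)) (dir_filter h)"
    using filtermap_fst_prod_filter unfolding filterlim_def by blast
  moreover have "filterlim snd (nhds h) (dir_filter h)"
    using filtermap_snd_prod_filter unfolding filterlim_def by blast
  then have "((\<lambda>p. ((0::'a), snd p)) \<longlongrightarrow> (0, h)) (dir_filter h)"
    by (intro tendsto_intros)
  ultimately show ?thesis
    using filterlim_Pair by (fastforce simp: case_prod_beta')
qed

lemma filterlim_dir_filter_sequentially:
  fixes w :: "nat \<Rightarrow> 'z::real_normed_vector"
  assumes "\<forall>k. t k > 0" and "t \<longlonglongrightarrow> 0" and "w \<longlonglongrightarrow> w0"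
  shows "filterlim (\<lambda>k. (t k, w k)) (dir_filter w0) sequentially"
proof (rule filterlim_Pair)
  show "filterlim t (at_right 0) sequentially"
    unfolding filterlim_at using assms
    by (auto intro!: always_eventually simp: less_imp_neq[symmetric])
qed (rule assms(3))

lemma subderiv_eqI:
  assumes "((\<lambda>(t, w'). (\<psi> (z + t *\<^sub>R w') - \<psi> z) / t) \<longlongrightarrow> L) (dir_filter w)"
  shows "subderiv \<psi> z w = ereal L"
  unfolding subderiv_def
  by (rule lim_imp_Liminf[OF dir_filter_neq_bot])
     (use tendsto_ereal[OF assms] in \<open>simp add: case_prod_beta'\<close>)

lemma second_subderiv_eqI:
  assumes "(second_quot \<psi> z \<longlongrightarrow> L) (dir_filter w)"
  shows "second_subderiv \<psi> z w = ereal L"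
  unfolding second_subderiv_def
  by (rule lim_imp_Liminf[OF dir_filter_neq_bot]) (rule tendsto_ereal[OF assms])

lemma subderiv_partial_snd:
  assumes "semidifferentiable_at (case_prod f) (xb, yb)"
  shows "subderiv (f xb) yb w = subderiv (case_prod f) (xb, yb) (0, w)"
proof -
  obtain L where L: "((\<lambda>(t, w'). (case_prod f ((xb, yb) + t *\<^sub>R w') - case_prod f (xb, yb)) / t)
                        \<longlongrightarrow> L) (dir_filter (0, w))"
    using assms unfolding semidifferentiable_at_def by blast
  have "((\<lambda>(t, w'). (f xb (yb + t *\<^sub>R w') - f xb yb) / t) \<longlongrightarrow> L) (dir_filter w)"
    using filterlim_compose[OF L filterlim_dir_filter_Pair_zero]
    by (simp add: o_def case_prod_beta')
  with subderiv_eqI[OF L] show ?thesis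
    by (simp add: subderiv_eqI)
qed

lemma second_subderiv_partial_snd:
  assumes "twice_semidifferentiable_at (case_prod f) (xb, yb)"
    and "(second_quot (case_prod f) (xb, yb) \<longlongrightarrow> L) (dir_filter (0, h))"
  shows "second_subderiv (f xb) yb h = ereal L"
proof (rule second_subderiv_eqI)
  have "second_quot (f xb) yb = (\<lambda>(t, w). second_quot (case_prod f) (xb, yb) (t, (0, w)))"
    using assms(1) unfolding twice_semidifferentiable_at_def
    by (auto simp: second_quot_def subderiv_partial_snd)
  then show "(second_quot (f xb) yb \<longlongrightarrow> L) (dir_filter h)"
    using filterlim_compose[OF assms(2) filterlim_dir_filter_Pair_zero]
    by (simp add: o_def case_prod_beta')
qed

lemma second_subderiv_indicator_le_Liminf:
  assumes "\<forall>k. t k > 0" and "t \<longlonglongrightarrow> 0" and "w \<longlonglongrightarrow> w0" and "\<forall>k. z + t k *\<^sub>R w k \<in> S"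
  shows "second_subderiv_indicator S z \<phi> w0
           \<le> Liminf sequentially (\<lambda>k. ereal (- 2 * \<phi> (w k) / t k))"
proof -
  let ?F = "inf (dir_filter w0) (principal {(t, w'). z + t *\<^sub>R w' \<in> S})"
  have "filterlim (\<lambda>k. (t k, w k)) ?F sequentially"
    using filterlim_dir_filter_sequentially[OF assms(1-3)] assms(4)
    by (simp add: filterlim_inf filterlim_principal)
  then have "second_subderiv_indicator S z \<phi> w0
               \<le> Liminf (filtermap (\<lambda>k. (t k, w k)) sequentially) (\<lambda>(t, w'). ereal (- 2 * \<phi> w' / t))"
    unfolding second_subderiv_indicator_def filterlim_def by (rule Liminf_filter_antimono)
  also have "\<dots> \<le> Liminf sequentially (\<lambda>k. ereal (- 2 * \<phi> (w k) / t k))"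
    using Liminf_filtermap_le[of "\<lambda>k. (t k, w k)" sequentially "\<lambda>(t, w'). ereal (- 2 * \<phi> w' / t)"]
    by simp
  finally show ?thesis .
qed

lemma indicator_quot_le_second_quot:
  assumes "\<psi> z \<le> \<psi> (z + t *\<^sub>R w)" and "t > 0"
  shows "- 2 * real_of_ereal (subderiv \<psi> z w) / t \<le> second_quot \<psi> z (t, w)"
proof -
  define D where "D = real_of_ereal (subderiv \<psi> z w)"
  have "- 2 * D / t = (- t * D) / (t\<^sup>2 / 2)"
    using assms(2) by (simp add: field_simps power2_eq_square)
  also have "\<dots> \<le> (\<psi> (z + t *\<^sub>R w) - \<psi> z - t * D) / (t\<^sup>2 / 2)"
    using assms by (intro divide_right_mono) auto
  finally show ?thesis
    by (simp add: second_quot_def D_def)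
qed

definition ascent_direction ::
  "'a::real_normed_vector set \<Rightarrow> 'b::real_normed_vector set \<Rightarrow> ('a \<Rightarrow> 'b \<Rightarrow> real) \<Rightarrow> 'a \<Rightarrow> 'b
   \<Rightarrow> 'b \<Rightarrow> bool" where
  "ascent_direction X Y f xb yb h \<longleftrightarrow>
     (\<exists>t u v. (\<forall>k. t k > 0) \<and> t \<longlonglongrightarrow> 0 \<and> u \<longlonglongrightarrow> 0 \<and> v \<longlonglongrightarrow> h \<and>
        (\<forall>k. xb + t k *\<^sub>R u k \<in> X \<and> yb + t k *\<^sub>R v k \<in> Y \<and>
             f xb yb \<le> f (xb + t k *\<^sub>R u k) (yb + t k *\<^sub>R v k)))"

lemma ascent_direction_tangent_cone:
  assumes "ascent_direction X Y f xb yb h"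
  shows "h \<in> tangent_cone Y yb"
  using assms unfolding ascent_direction_def tangent_cone_def by blast

lemma second_subderiv_indicator_le_second_subderiv:
  assumes "twice_semidifferentiable_at (case_prod f) (xb, yb)"
    and "ascent_direction X Y f xb yb h"
  shows "second_subderiv_indicator (X \<times> Y) (xb, yb)
           (\<lambda>w. real_of_ereal (subderiv (case_prod f) (xb, yb) w)) (0, h)
         \<le> second_subderiv (f xb) yb h"
proof -
  let ?F = "case_prod f" and ?z = "(xb, yb)"
  obtain t u v where t: "\<forall>k. t k > 0" "t \<longlonglongrightarrow> 0" and uv: "u \<longlonglongrightarrow> 0" "v \<longlonglongrightarrow> h"
    and mem: "\<forall>k. ?z + t k *\<^sub>R (u k, v k) \<in> X \<times> Y"
    and ascent: "\<forall>k. ?F ?z \<le> ?F (?z + t k *\<^sub>R (u k, v k))"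
    using assms(2) unfolding ascent_direction_def by auto
  have w: "(\<lambda>k. (u k, v k)) \<longlonglongrightarrow> (0, h)"
    using uv by (intro tendsto_intros)
  obtain L where L: "(second_quot ?F ?z \<longlongrightarrow> L) (dir_filter (0, h))"
    using assms(1) unfolding twice_semidifferentiable_at_def by blast
  have "second_subderiv_indicator (X \<times> Y) ?z (\<lambda>w. real_of_ereal (subderiv ?F ?z w)) (0, h)
          \<le> Liminf sequentially
              (\<lambda>k. ereal (- 2 * real_of_ereal (subderiv ?F ?z (u k, v k)) / t k))"
    by (rule second_subderiv_indicator_le_Liminf[OF t w mem])
  also have "\<dots> \<le> Liminf sequentially (\<lambda>k. ereal (second_quot ?F ?z (t k, (u k, v k))))"
    using indicator_quot_le_second_quot[OF ascent[rule_format] t(1)[rule_format]]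
    by (intro Liminf_mono) simp
  also have "\<dots> = ereal L"
    using filterlim_compose[OF L filterlim_dir_filter_sequentially[OF t w]]
    by (intro lim_imp_Liminf tendsto_ereal) (simp_all add: o_def)
  also have "\<dots> = second_subderiv (f xb) yb h"
    using second_subderiv_partial_snd[OF assms(1) L] by simp
  finally show ?thesis .
qed

lemma ex_ascent_direction_if_superlinear:
  fixes x :: "nat \<Rightarrow> 'a::real_normed_vector" and y :: "nat \<Rightarrow> 'b::euclidean_space"
  assumes "\<forall>n. x n \<in> X \<and> y n \<in> Y \<and> f xb yb \<le> f (x n) (y n)"
    and "\<forall>n. y n \<noteq> yb" and "y \<longlonglongrightarrow> yb"
    and "(\<lambda>n. norm (x n - xb) / norm (y n - yb)) \<longlonglongrightarrow> 0"
  shows "\<exists>h. h \<noteq> 0 \<and> ascent_direction X Y f xb yb h"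
proof -
  define s where "s n = norm (y n - yb)" for n
  define u where "u n = inverse (s n) *\<^sub>R (x n - xb)" for n
  define v where "v n = inverse (s n) *\<^sub>R (y n - yb)" for n
  have s_pos: "s n > 0" for n
    using assms(2) by (simp add: s_def)
  have "s \<longlonglongrightarrow> 0"
    unfolding s_def using assms(3) by (intro tendsto_norm_zero) (simp add: LIM_zero)
  moreover have "u \<longlonglongrightarrow> 0"
  proof (rule tendsto_norm_zero_cancel)
    have "norm (u n) = norm (x n - xb) / norm (y n - yb)" for n
      using s_pos[of n] by (simp add: u_def s_def divide_inverse mult.commute)
    then show "(\<lambda>n. norm (u n)) \<longlonglongrightarrow> 0"
      using assms(4) by simp
  qed
  moreover have "v n \<in> sphere 0 1" for n
    using s_pos[of n] by (simp add: v_def s_def)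
  then obtain l r where l: "l \<in> sphere (0::'b) 1" and r: "strict_mono r" and "(v \<circ> r) \<longlonglongrightarrow> l"
    using seq_compactE[OF compact_imp_seq_compact[OF compact_sphere], of v] by metis
  moreover have "xb + s n *\<^sub>R u n = x n" "yb + s n *\<^sub>R v n = y n" for n
    using s_pos[of n] by (simp_all add: u_def v_def)
  ultimately have "ascent_direction X Y f xb yb l"
    unfolding ascent_direction_def using assms(1) s_pos
    by (intro exI[of _ "s \<circ> r"] exI[of _ "u \<circ> r"] exI[of _ "v \<circ> r"])
       (simp add: LIMSEQ_subseq_LIMSEQ[OF _ r])
  moreover have "l \<noteq> 0"
    using l by auto
  ultimately show ?thesis by blast
qed

lemma radius_function_tendsto_zero:
  assumes "radius_function \<tau>" and "\<forall>n. d n > 0" and "d \<longlonglongrightarrow> 0"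
  shows "(\<lambda>n. \<tau> (d n)) \<longlonglongrightarrow> 0"
proof -
  have "filterlim d (at_right 0) sequentially"
    unfolding filterlim_at using assms(2,3)
    by (auto intro!: always_eventually simp: less_imp_neq[symmetric])
  with assms(1) show ?thesis
    unfolding radius_function_def using filterlim_compose by blast
qed

lemma linear_response_bound:
  fixes X :: "'a::euclidean_space set" and Y :: "'b::euclidean_space set"
  assumes "yb \<in> Y" and "radius_function \<tau>" and "minimax_with_radius X Y f xb yb \<tau>"
    and no_ascent: "\<forall>h. ascent_direction X Y f xb yb h \<longrightarrow> h = 0"
  shows "\<exists>\<kappa>>0. \<exists>\<delta>1>0. \<forall>x\<in>X \<inter> cball xb \<delta>1.
           \<exists>y'\<in>Y \<inter> cball yb (\<kappa> * dist xb x). f xb yb \<le> f x y'"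
proof (rule ccontr)
  assume no_bound: "\<not> ?thesis"
  obtain \<delta>0 where "\<delta>0 > 0" and response: "\<forall>\<delta>\<in>{0<..\<delta>0}. \<forall>x\<in>X \<inter> cball xb \<delta>.
      \<exists>y'\<in>Y \<inter> cball yb (\<tau> \<delta>). f xb yb \<le> f x y'"
    using assms(1,3) unfolding minimax_with_radius_def by fastforce
  have "\<exists>x\<in>X \<inter> cball xb (min \<delta>0 (inverse (real (Suc n)))).
          \<not> (\<exists>y'\<in>Y \<inter> cball yb (real (Suc n) * dist xb x). f xb yb \<le> f x y')" for n
  proof -
    have "real (Suc n) > 0" "min \<delta>0 (inverse (real (Suc n))) > 0"
      using \<open>\<delta>0 > 0\<close> by auto
    then show ?thesis
      using no_bound by blast
  qed
  then obtain x where x: "\<And>n. x n \<in> X \<inter> cball xb (min \<delta>0 (inverse (real (Suc n))))"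
    and x_far: "\<And>n. \<not> (\<exists>y'\<in>Y \<inter> cball yb (real (Suc n) * dist xb (x n)). f xb yb \<le> f (x n) y')"
    by metis
  define d where "d n = dist xb (x n)" for n
  have d_pos: "d n > 0" for n
    using x_far[of n] assms(1) by (auto simp: d_def)
  have d_le: "d n \<le> inverse (real (Suc n))" "d n \<le> \<delta>0" for n
    using x[of n] by (auto simp: d_def)
  have "d \<longlonglongrightarrow> 0"
    by (rule Lim_null_comparison[OF always_eventually LIMSEQ_inverse_real_of_nat])
       (use d_le(1) d_pos in \<open>simp add: less_imp_le\<close>)
  have "\<exists>y\<in>Y \<inter> cball yb (\<tau> (d n)). f xb yb \<le> f (x n) y" for n
    using response d_pos[of n] d_le(2)[of n] x[of n] by (auto simp: d_def)
  then obtain y where y: "\<And>n. y n \<in> Y \<inter> cball yb (\<tau> (d n))"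
    and y_ascent: "\<And>n. f xb yb \<le> f (x n) (y n)"
    by metis
  have y_far: "real (Suc n) * d n < dist yb (y n)" for n
    using x_far[of n] y[of n] y_ascent[of n] by (force simp: d_def dist_commute)
  have "\<exists>h. h \<noteq> 0 \<and> ascent_direction X Y f xb yb h"
  proof (rule ex_ascent_direction_if_superlinear)
    show "\<forall>n. x n \<in> X \<and> y n \<in> Y \<and> f xb yb \<le> f (x n) (y n)"
      using x y y_ascent by blast
    show "\<forall>n. y n \<noteq> yb"
    proof
      fix n
      have "0 < real (Suc n) * d n"
        using d_pos[of n] by simp
      then show "y n \<noteq> yb"
        using y_far[of n] by auto
    qed
    have "(\<lambda>n. y n - yb) \<longlonglongrightarrow> 0"
    proof (rule Lim_null_comparison[OF always_eventually])
      show "\<forall>n. norm (y n - yb) \<le> \<tau> (d n)"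
        using y by (simp add: dist_norm norm_minus_commute)
    qed (rule radius_function_tendsto_zero[OF assms(2) _ \<open>d \<longlonglongrightarrow> 0\<close>], use d_pos in blast)
    then show "y \<longlonglongrightarrow> yb"
      by (rule Lim_null[THEN iffD2])
    have "norm (x n - xb) / norm (y n - yb) \<le> inverse (real (Suc n))" for n
    proof -
      have "d n / dist yb (y n) \<le> inverse (real (Suc n))"
        using y_far[of n] d_pos[of n] by (simp add: divide_simps mult.commute)
      then show ?thesis
        by (simp add: d_def dist_norm norm_minus_commute)
    qed
    then show "(\<lambda>n. norm (x n - xb) / norm (y n - yb)) \<longlonglongrightarrow> 0"
      by (intro Lim_null_comparison[OF always_eventually LIMSEQ_inverse_real_of_nat]) simp
  qed
  with no_ascent show False
    by blast
qed

lemma calm_local_minimax_if_linear_response: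
  assumes "xb \<in> X" and "yb \<in> Y" and "minimax_with_radius X Y f xb yb \<tau>"
    and "\<exists>\<kappa>>0. \<exists>\<delta>1>0. \<forall>x\<in>X \<inter> cball xb \<delta>1.
           \<exists>y'\<in>Y \<inter> cball yb (\<kappa> * dist xb x). f xb yb \<le> f x y'"
  shows "calm_local_minimax X Y f xb yb"
proof -
  obtain \<kappa> \<delta>1 where "\<kappa> > 0" "\<delta>1 > 0" and response: "\<forall>x\<in>X \<inter> cball xb \<delta>1.
      \<exists>y'\<in>Y \<inter> cball yb (\<kappa> * dist xb x). f xb yb \<le> f x y'"
    using assms(4) by blast
  obtain \<delta>0 where "\<delta>0 > 0" and maximal: "\<forall>\<delta>\<in>{0<..\<delta>0}. \<forall>y\<in>Y \<inter> cball yb \<delta>. f xb y \<le> f xb yb"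
    using assms(1,3) unfolding minimax_with_radius_def by fastforce
  have "minimax_with_radius X Y f xb yb (\<lambda>\<delta>. \<kappa> * \<delta>)"
    unfolding minimax_with_radius_def
  proof (intro exI[of _ "min \<delta>0 \<delta>1"] conjI ballI)
    fix \<delta> x y
    assume \<delta>: "\<delta> \<in> {0<..min \<delta>0 \<delta>1}" and x: "x \<in> X \<inter> cball xb \<delta>" and "y \<in> Y \<inter> cball yb \<delta>"
    then show "f xb y \<le> f xb yb"
      using maximal by auto
    obtain y' where "y' \<in> Y \<inter> cball yb (\<kappa> * dist xb x)" "f xb yb \<le> f x y'"
      using response x \<delta> by fastforce
    moreover have "\<kappa> * dist xb x \<le> \<kappa> * \<delta>"
      using x \<open>\<kappa> > 0\<close> by simp
    ultimately show "\<exists>y'\<in>Y \<inter> cball yb (\<kappa> * \<delta>). f xb yb \<le> f x y'"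
      by auto
  qed (use \<open>\<delta>0 > 0\<close> \<open>\<delta>1 > 0\<close> in simp)
  moreover have "radius_function (\<lambda>\<delta>. \<kappa> * \<delta>)"
    unfolding radius_function_def using \<open>\<kappa> > 0\<close> tendsto_mult_right_zero[OF tendsto_ident_at]
    by force
  moreover have "calm_at_0 (\<lambda>\<delta>. \<kappa> * \<delta>)"
    unfolding calm_at_0_def using \<open>\<kappa> > 0\<close> by (auto intro: exI[of _ 1])
  ultimately show ?thesis
    unfolding calm_local_minimax_def using assms(1,2) by blast
qed

theorem mainTheorem7:
  fixes X :: "'a::euclidean_space set" and Y :: "'b::euclidean_space set"
    and f :: "'a \<Rightarrow> 'b \<Rightarrow> real" and xb :: 'a and yb :: 'b
  assumes "X \<noteq> {}" and "closed X" and "Y \<noteq> {}" and "closed Y"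
    and standing: "\<forall>x\<in>X. \<forall>y0\<in>Y. \<forall>\<epsilon>\<ge>0. \<exists>y\<in>Y \<inter> cball y0 \<epsilon>.
                      \<forall>y'\<in>Y \<inter> cball y0 \<epsilon>. f x y' \<le> f x y"
    and "local_minimax X Y f xb yb"
    and "twice_semidifferentiable_at (case_prod f) (xb, yb)"
    and "\<forall>h\<in>tangent_cone Y yb - {0}.
           second_subderiv (f xb) yb h
           - second_subderiv_indicator (X \<times> Y) (xb, yb)
               (\<lambda>w. real_of_ereal (subderiv (case_prod f) (xb, yb) w)) (0, h) < 0"
  shows "calm_local_minimax X Y f xb yb"
proof -
  obtain \<tau> where "xb \<in> X" "yb \<in> Y" "radius_function \<tau>" "minimax_with_radius X Y f xb yb \<tau>"
    using assms(6) unfolding local_minimax_def by blast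
  moreover have "\<forall>h. ascent_direction X Y f xb yb h \<longrightarrow> h = 0"
  proof (intro allI impI)
    fix h
    assume ascent: "ascent_direction X Y f xb yb h"
    have "0 \<le> second_subderiv (f xb) yb h
              - second_subderiv_indicator (X \<times> Y) (xb, yb)
                  (\<lambda>w. real_of_ereal (subderiv (case_prod f) (xb, yb) w)) (0, h)"
      using second_subderiv_indicator_le_second_subderiv[OF assms(7) ascent]
      by (rule ereal_diff_positive)
    then show "h = 0"
      using assms(8) ascent_direction_tangent_cone[OF ascent] by force
  qed
  ultimately show ?thesis
    by (intro calm_local_minimax_if_linear_response linear_response_bound)
qed

end
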